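(* Let $Y$ be a normed vector space and $A$ a nonempty closed convex subset of $Y$ such that $\operatorname{bar}(A)\neq\{0\}$ (equivalently $A\neq Y$). Then $A$ is weak-admissible at each of its points and is determined by the set $$C=\{y^*-\inf_{x\in A}y^*(x):\ y^*\in S_{Y^*}\cap(-\operatorname{bar}(A))\}.$$ Moreover, $A$ is admissible at each of its points, determined by $C$, whenever $0\notin\overline{\operatorname{conv}}^{w^*}(S_{Y^*}\cap(-\operatorname{bar}(A)))$. Consequently: (i) every closed convex set $A$ with $A\neq Y$ and $\operatorname{int}(\mathcal{R}_A)\neq\emptyset$ is admissible at each of its points, determined by $C$; (ii) in particular, every closed convex cone $A$ of $Y$ with $A\neq Y$ and $\operatorname{int}(A)\neq\emptyset$ is admissible at each of its points, determined by $S_{Y^*}\cap A^*$.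
   Context: $Y^*$ is the dual of $Y$ with the weak-star topology, $S_{Y^*}$ its unit sphere, $\overline{\operatorname{conv}}^{w^*}$ the $w^*$-closed convex hull. $\operatorname{bar}(A):=\{y^*\in Y^*:\sup_{y\in A}y^*(y)<+\infty\}$ (barrier cone); $\mathcal{R}_A:=\{v\in Y:x+\lambda v\in A\ \forall\lambda>0,\forall x\in A\}$ (recession cone); $A^*:=\{y^*\in Y^*:y^*(y)\ge0\ \forall y\in A\}$. Elements $y^*-c$ of $C$ are the functions $y\mapsto y^*(y)-c$. For a family $C$ of functions $\phi:Y\to\mathbb{R}$, $[C]^\times:=\{y:\phi(y)\ge0\ \forall\phi\in C\}$. $C$ is equi-Gateaux differentiable at $y$ if each $\phi$ is Gateaux differentiable at $y$ (differential $d_G\phi(y)\in Y^*$, defined via one-sided limits $t\searrow0$) and for each $v$, $\lim_{t\searrow0}\sup_{\phi\in C}|(\phi(y+tv)-\phi(y)-t\langle d_G\phi(y),v\rangle)/t|=0$; equi-lower semicontinuous at $y$ if for every $\varepsilon>0$ some open neighbourhood $O$ of $y$ satisfies $\phi(z)-\phi(y)>-\varepsilon$ for all $z\in O,\phi\in C$; $r$-equi-Lipschitz at $y$ if all $\phi\in C$ are $r$-Lipschitz on a common ball centered at $y$. $A$ is weak-admissible at $\hat y\in A$, determined by a nonempty family $C$, if: (a) $A=[C]^\times$; (b) $C$ is equi-Gateaux differentiable at $\hat y$; (c) $\{\phi\in C:\phi(\hat y)\ne0\}$ is empty or equi-lower semicontinuous at $\hat y$; (d) $\overline{\operatorname{conv}}^{w^*}\{d_G\phi(\hat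 y):\phi\in C\}$ is $w^*$-compact. $A$ is admissible at $\hat y\in A$, determined by a nonempty family $C$, if: (a) $A=[C]^\times$; (b) $C$ is equi-Gateaux differentiable and $r$-equi-Lipschitz at $\hat y$ for some $r\ge0$; (c) $0\notin\overline{\operatorname{conv}}^{w^*}\{d_G\phi(\hat y):\phi\in C\}$. *)

theory Defs
  imports "HOL-Analysis.Analysis"
begin

text \<open>The dual space Y* is the type of bounded linear functionals 'a \<Rightarrow>L real;
  its weak-star topology is the topology of pointwise convergence, i.e. the pullback
  of the product (pointwise) topology on 'a \<Rightarrow> real along blinfun_apply.\<close>

definition wstar_topology :: "('a::real_normed_vector \<Rightarrow>\<^sub>L real) topology" where
  "wstar_topology = pullback_topology UNIV blinfun_apply euclidean"

definition wstar_cch :: "('a::real_normed_vector \<Rightarrow>\<^sub>L real) set \<Rightarrow> ('a \<Rightarrow>\<^sub>L real) set" where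
  "wstar_cch S = wstar_topology closure_of (convex hull S)"

definition dual_sphere :: "('a::real_normed_vector \<Rightarrow>\<^sub>L real) set" where
  "dual_sphere = {f. norm f = 1}"

definition bar :: "'a::real_normed_vector set \<Rightarrow> ('a \<Rightarrow>\<^sub>L real) set" where
  "bar A = {f. bdd_above (blinfun_apply f ` A)}"

definition rec_cone :: "'a::real_normed_vector set \<Rightarrow> 'a set" where
  "rec_cone A = {v. \<forall>l>0. \<forall>x\<in>A. x + l *\<^sub>R v \<in> A}"

definition dual_cone :: "'a::real_normed_vector set \<Rightarrow> ('a \<Rightarrow>\<^sub>L real) set" where
  "dual_cone A = {f. \<forall>y\<in>A. blinfun_apply f y \<ge> 0}"

definition nonneg_set :: "('a \<Rightarrow> real) set \<Rightarrow> 'a set" where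
  "nonneg_set C = {y. \<forall>\<phi>\<in>C. \<phi> y \<ge> 0}"

definition gateaux_diff :: "('a::real_normed_vector \<Rightarrow> real) \<Rightarrow> 'a \<Rightarrow> ('a \<Rightarrow>\<^sub>L real) \<Rightarrow> bool" where
  "gateaux_diff \<phi> y L \<longleftrightarrow>
     (\<forall>v. ((\<lambda>t. (\<phi> (y + t *\<^sub>R v) - \<phi> y) / t) \<longlongrightarrow> blinfun_apply L v) (at_right 0))"

text \<open>equi-Gateaux differentiability of C at y, with D giving the Gateaux differentials;
  the limit of the supremum being 0 is written out as: for every eps > 0, eventually
  for t \<searrow> 0 every quotient is at most eps.\<close>
definition equi_gateaux :: "('a::real_normed_vector \<Rightarrow> real) set \<Rightarrow> 'a \<Rightarrow> (('a \<Rightarrow> real) \<Rightarrow> ('a \<Rightarrow>\<^sub>L real)) \<Rightarrow> bool" where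
  "equi_gateaux C y D \<longleftrightarrow>
     (\<forall>\<phi>\<in>C. gateaux_diff \<phi> y (D \<phi>)) \<and>
     (\<forall>v. \<forall>\<epsilon>>0. eventually (\<lambda>t. \<forall>\<phi>\<in>C.
          \<bar>(\<phi> (y + t *\<^sub>R v) - \<phi> y - t * blinfun_apply (D \<phi>) v) / t\<bar> \<le> \<epsilon>) (at_right 0))"

definition equi_lsc :: "('a::real_normed_vector \<Rightarrow> real) set \<Rightarrow> 'a \<Rightarrow> bool" where
  "equi_lsc C y \<longleftrightarrow>
     (\<forall>\<epsilon>>0. \<exists>U. open U \<and> y \<in> U \<and> (\<forall>z\<in>U. \<forall>\<phi>\<in>C. \<phi> z - \<phi> y > - \<epsilon>))"

definition equi_lipschitz :: "real \<Rightarrow> ('a::real_normed_vector \<Rightarrow> real) set \<Rightarrow> 'a \<Rightarrow> bool" where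
  "equi_lipschitz r C y \<longleftrightarrow>
     (\<exists>\<delta>>0. \<forall>\<phi>\<in>C. \<forall>x\<in>ball y \<delta>. \<forall>z\<in>ball y \<delta>. \<bar>\<phi> x - \<phi> z\<bar> \<le> r * norm (x - z))"

definition weak_admissible :: "'a::real_normed_vector set \<Rightarrow> 'a \<Rightarrow> ('a \<Rightarrow> real) set \<Rightarrow> bool" where
  "weak_admissible A y C \<longleftrightarrow> y \<in> A \<and> C \<noteq> {} \<and>
     A = nonneg_set C \<and>
     (\<exists>D. equi_gateaux C y D \<and>
        ({\<phi>\<in>C. \<phi> y \<noteq> 0} = {} \<or> equi_lsc {\<phi>\<in>C. \<phi> y \<noteq> 0} y) \<and>
        compactin wstar_topology (wstar_cch (D ` C)))"

definition admissible :: "'a::real_normed_vector set \<Rightarrow> 'a \<Rightarrow> ('a \<Rightarrow> real) set \<Rightarrow> bool" where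
  "admissible A y C \<longleftrightarrow> y \<in> A \<and> C \<noteq> {} \<and>
     A = nonneg_set C \<and>
     (\<exists>D. equi_gateaux C y D \<and> (\<exists>r\<ge>0. equi_lipschitz r C y) \<and>
        0 \<notin> wstar_cch (D ` C))"

definition Cfam :: "'a::real_normed_vector set \<Rightarrow> ('a \<Rightarrow> real) set" where
  "Cfam A = {(\<lambda>y. blinfun_apply f y - (INF x\<in>A. blinfun_apply f x)) | f. f \<in> dual_sphere \<inter> uminus ` bar A}"

end

theory Submission
  imports Defs
begin

(* Each member y* - inf_A y* of C is a continuous affine function whose linear part y* has norm 1.
   Hence C is trivially equi-Gateaux differentiable, with differentials forming exactly the set
   S_{Y*} \<inter> (-bar A), and 1-equi-Lipschitz, hence equi-lower semicontinuous; the differentials lie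
   in the dual unit ball, which is weak-star compact (Banach-Alaoglu via Tychonoff), so their
   weak-star closed convex hull is compact. The identity [C]^\<times> = A is the Hahn-Banach separation
   of a point from a closed convex set. For (i), a closed ball cball v e inside the recession cone
   forces y*(v) \<ge> e for every y* \<in> S_{Y*} \<inter> (-bar A), and this half-space is weak-star closed and
   convex but misses 0. For (ii), a convex cone lies in its own recession cone, -bar A = A^* and
   inf_A y* = 0. *)

section \<open>Hahn-Banach extension dominated by a sublinear functional\<close>

definition sublinear :: "('a::real_vector \<Rightarrow> real) \<Rightarrow> bool" where
  "sublinear p \<longleftrightarrow>
     (\<forall>x y. p (x + y) \<le> p x + p y) \<and> (\<forall>x t. 0 < t \<longrightarrow> p (t *\<^sub>R x) \<le> t * p x)"

lemma sublinear_add: "sublinear p \<Longrightarrow> p (x + y) \<le> p x + p y"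
  unfolding sublinear_def by blast

lemma sublinear_scaleR:
  assumes "sublinear p" "0 < t"
  shows "p (t *\<^sub>R x) = t * p x"
proof (rule antisym)
  show "p (t *\<^sub>R x) \<le> t * p x"
    using assms unfolding sublinear_def by blast
  have "p (inverse t *\<^sub>R (t *\<^sub>R x)) \<le> inverse t * p (t *\<^sub>R x)"
    using assms unfolding sublinear_def by (meson inverse_positive_iff_positive)
  then show "t * p x \<le> p (t *\<^sub>R x)"
    using assms by (simp add: field_simps)
qed

lemma sublinear_zero: "sublinear p \<Longrightarrow> p 0 = 0"
  using sublinear_scaleR[of p 2 0] by simp

lemma sublinear_neg_le: "sublinear p \<Longrightarrow> - p (- x) \<le> p x"
  using sublinear_add[of p x "- x"] sublinear_zero[of p] by simp

text \<open>A linear functional on a subspace, encoded by its graph \<open>G \<subseteq> 'a \<times> real\<close>.\<close>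

definition dominated_graph :: "('a::real_vector \<Rightarrow> real) \<Rightarrow> ('a \<times> real) set \<Rightarrow> bool" where
  "dominated_graph p G \<longleftrightarrow> subspace G \<and>
     (\<forall>x a b. (x, a) \<in> G \<longrightarrow> (x, b) \<in> G \<longrightarrow> a = b) \<and> (\<forall>x a. (x, a) \<in> G \<longrightarrow> a \<le> p x)"

lemma dominated_graph_extension_value:
  assumes "sublinear p" "dominated_graph p G"
  obtains c where "\<And>m a. (m, a) \<in> G \<Longrightarrow> a - p (m - z) \<le> c \<and> c \<le> p (m + z) - a"
proof -
  define S where "S = {a - p (m - z) | m a. (m, a) \<in> G}"
  have G: "subspace G" "\<And>x a. (x, a) \<in> G \<Longrightarrow> a \<le> p x"
    using assms(2) unfolding dominated_graph_def by blast+
  have "(0, 0) \<in> G"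
    using subspace_0[OF G(1)] by (simp add: zero_prod_def)
  then have "S \<noteq> {}"
    unfolding S_def by blast
  have S_le: "s \<le> p (m' + z) - a'" if "s \<in> S" "(m', a') \<in> G" for s m' a'
  proof -
    obtain m a where s: "s = a - p (m - z)" "(m, a) \<in> G"
      using \<open>s \<in> S\<close> unfolding S_def by blast
    have "a + a' \<le> p (m + m')"
      using G(2) subspace_add[OF G(1) s(2) that(2)] by simp
    also have "\<dots> = p ((m - z) + (m' + z))"
      by (simp add: algebra_simps)
    also have "\<dots> \<le> p (m - z) + p (m' + z)"
      by (rule sublinear_add[OF assms(1)])
    finally show ?thesis
      using s by simp
  qed
  then have "bdd_above S"
    using \<open>(0, 0) \<in> G\<close> unfolding bdd_above_def by blast
  show ?thesis
  proof (rule that[of "Sup S"], rule conjI)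
    fix m a assume "(m, a) \<in> G"
    then show "a - p (m - z) \<le> Sup S"
      using \<open>bdd_above S\<close> by (intro cSup_upper) (auto simp: S_def)
    show "Sup S \<le> p (m + z) - a"
      using \<open>S \<noteq> {}\<close> S_le \<open>(m, a) \<in> G\<close> by (intro cSup_least) auto
  qed
qed

lemma dominated_graph_extension_le:
  assumes p: "sublinear p" and G: "dominated_graph p G"
    and c: "\<And>m a. (m, a) \<in> G \<Longrightarrow> a - p (m - z) \<le> c \<and> c \<le> p (m + z) - a"
    and ma: "(m, a) \<in> G"
  shows "a + t * c \<le> p (m + t *\<^sub>R z)"
proof -
  have sub: "subspace G" and dom: "a \<le> p m"
    using G ma unfolding dominated_graph_def by blast+
  consider "t = 0" | "0 < t" | "t < 0" by linarith
  then show ?thesis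
  proof cases
    case 1
    then show ?thesis using dom by simp
  next
    case 2
    have "inverse t * a \<le> p (inverse t *\<^sub>R m + z) - c"
      using c[of "inverse t *\<^sub>R m" "inverse t * a"] subspace_scale[OF sub ma, of "inverse t"]
      by simp
    also have "inverse t *\<^sub>R m + z = inverse t *\<^sub>R (m + t *\<^sub>R z)"
      using 2 by (simp add: algebra_simps)
    finally show ?thesis
      using 2 sublinear_scaleR[OF p, of "inverse t" "m + t *\<^sub>R z"] by (simp add: field_simps)
  next
    case 3
    have "inverse (- t) * a - p (inverse (- t) *\<^sub>R m - z) \<le> c"
      using c[of "inverse (- t) *\<^sub>R m" "inverse (- t) * a"] subspace_scale[OF sub ma, of "inverse (- t)"]
      by simp
    also have "inverse (- t) *\<^sub>R m - z = inverse (- t) *\<^sub>R (m + t *\<^sub>R z)"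
      using 3 by (simp add: algebra_simps)
    finally show ?thesis
      using 3 sublinear_scaleR[OF p, of "inverse (- t)" "m + t *\<^sub>R z"] by (simp add: field_simps)
  qed
qed

lemma dominated_graph_extend:
  assumes p: "sublinear p" and G: "dominated_graph p G" and z: "z \<notin> fst ` G"
  obtains G' where "dominated_graph p G'" "G \<subseteq> G'" "z \<in> fst ` G'"
proof -
  obtain c where c: "\<And>m a. (m, a) \<in> G \<Longrightarrow> a - p (m - z) \<le> c \<and> c \<le> p (m + z) - a"
    by (rule dominated_graph_extension_value[OF p G]) blast
  have sub: "subspace G" and sv: "\<And>x a b. (x, a) \<in> G \<Longrightarrow> (x, b) \<in> G \<Longrightarrow> a = b"
    using G unfolding dominated_graph_def by blast+
  define G' where "G' = span (insert (z, c) G)"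
  have mem_G': "(x, b) \<in> G' \<longleftrightarrow> (\<exists>t. (x - t *\<^sub>R z, b - t * c) \<in> G)" for x b
    unfolding G'_def span_breakdown_eq span_eq_iff[THEN iffD2, OF sub] by simp
  have "b = b'" if xb: "(x, b) \<in> G'" "(x, b') \<in> G'" for x b b'
  proof -
    obtain t t' where t: "(x - t *\<^sub>R z, b - t * c) \<in> G" "(x - t' *\<^sub>R z, b' - t' * c) \<in> G"
      using xb mem_G' by blast
    have diff: "((t' - t) *\<^sub>R z, (b - b') - (t - t') * c) \<in> G"
      using subspace_diff[OF sub t] by (simp add: algebra_simps)
    have "t = t'"
    proof (rule ccontr)
      assume "t \<noteq> t'"
      then have "(z, inverse (t' - t) * ((b - b') - (t - t') * c)) \<in> G"
        using subspace_scale[OF sub diff, of "inverse (t' - t)"] by simp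
      with z show False by force
    qed
    then show "b = b'"
      using sv[of 0 "b - b'" 0] diff subspace_0[OF sub] by (simp add: zero_prod_def)
  qed
  moreover have "b \<le> p x" if "(x, b) \<in> G'" for x b
  proof -
    obtain t where "(x - t *\<^sub>R z, b - t * c) \<in> G"
      using \<open>(x, b) \<in> G'\<close> mem_G' by blast
    from dominated_graph_extension_le[OF p G c this, of t] show ?thesis
      by simp
  qed
  moreover have "z \<in> fst ` G'"
    unfolding G'_def by (force intro: span_base)
  moreover have "G \<subseteq> G'"
    unfolding G'_def using span_superset by blast
  ultimately show ?thesis
    using that[of G'] unfolding dominated_graph_def G'_def by simp
qed

lemma dominated_graph_Union_chain:
  assumes "C \<in> chains {G. dominated_graph p G}" "C \<noteq> {}"
  shows "dominated_graph p (\<Union>C)"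
proof -
  have dom: "\<And>G. G \<in> C \<Longrightarrow> dominated_graph p G"
    and chain: "\<And>G H. G \<in> C \<Longrightarrow> H \<in> C \<Longrightarrow> G \<subseteq> H \<or> H \<subseteq> G"
    using assms(1) unfolding chains_def chain_subset_def by blast+
  have common: "\<exists>G\<in>C. u \<in> G \<and> w \<in> G" if "u \<in> \<Union>C" "w \<in> \<Union>C" for u w
    using that chain by blast
  have "subspace (\<Union>C)"
    unfolding subspace_def
  proof (intro conjI ballI allI)
    show "0 \<in> \<Union>C"
      using assms(2) dom subspace_0 unfolding dominated_graph_def by blast
    show "u + w \<in> \<Union>C" if "u \<in> \<Union>C" "w \<in> \<Union>C" for u w
      using common[OF that] dom subspace_add unfolding dominated_graph_def by blast
    show "c *\<^sub>R u \<in> \<Union>C" if "u \<in> \<Union>C" for c u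
      using that dom subspace_scale unfolding dominated_graph_def by blast
  qed
  moreover have "a = b" if "(x, a) \<in> \<Union>C" "(x, b) \<in> \<Union>C" for x a b
    using common[OF that] dom unfolding dominated_graph_def by blast
  ultimately show ?thesis
    using dom unfolding dominated_graph_def by blast
qed

lemma dominated_graph_maximal_extension:
  assumes p: "sublinear p" and G0: "dominated_graph p G0"
  obtains M where "dominated_graph p M" "G0 \<subseteq> M" "fst ` M = UNIV"
proof -
  define D where "D = {G. dominated_graph p G \<and> G0 \<subseteq> G}"
  have chain_bound: "\<forall>C\<in>chains D. \<exists>U\<in>D. \<forall>G\<in>C. G \<subseteq> U"
  proof
    fix C assume C: "C \<in> chains D"
    show "\<exists>U\<in>D. \<forall>G\<in>C. G \<subseteq> U"
    proof (cases "C = {}")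
      case True
      with G0 show ?thesis by (auto simp: D_def)
    next
      case False
      from C have "C \<subseteq> D" "chain\<^sub>\<subseteq> C"
        by (simp_all add: chains_def)
      then have "C \<in> chains {G. dominated_graph p G}"
        by (auto simp: chains_def D_def)
      then have "dominated_graph p (\<Union>C)"
        using False by (rule dominated_graph_Union_chain)
      moreover from False \<open>C \<subseteq> D\<close> have "G0 \<subseteq> \<Union>C"
        by (auto simp: D_def)
      ultimately have "\<Union>C \<in> D"
        by (simp add: D_def)
      then show ?thesis
        by auto
    qed
  qed
  obtain M where "M \<in> D" and maximal: "\<And>G. G \<in> D \<Longrightarrow> M \<subseteq> G \<Longrightarrow> G = M"
    using Zorn_Lemma2[OF chain_bound] by auto
  then have M: "dominated_graph p M" "G0 \<subseteq> M"
    by (simp_all add: D_def)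
  have "x \<in> fst ` M" for x
  proof (rule ccontr)
    assume "x \<notin> fst ` M"
    obtain G where "dominated_graph p G" "M \<subseteq> G" "x \<in> fst ` G"
      by (rule dominated_graph_extend[OF p M(1) \<open>x \<notin> fst ` M\<close>])
    moreover from this M(2) have "G = M"
      by (intro maximal) (auto simp: D_def)
    ultimately show False
      using \<open>x \<notin> fst ` M\<close> by simp
  qed
  then show ?thesis
    by (intro that[OF M]) auto
qed

lemma dominated_graph_span_singleton:
  assumes p: "sublinear p"
  shows "dominated_graph p (span {(y0, p y0)})"
proof -
  have "a \<le> p x" if xa: "(x, a) \<in> span {(y0, p y0)}" for x a
  proof -
    obtain t where t: "x = t *\<^sub>R y0" "a = t * p y0"
      using xa unfolding span_singleton by auto
    consider "0 \<le> t" | "t < 0" by linarith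
    then show ?thesis
    proof cases
      case 1
      then show ?thesis
        using t sublinear_scaleR[OF p, of t y0] sublinear_zero[OF p] by (cases "t = 0") auto
    next
      case 2
      have "t * p y0 \<le> t * - p (- y0)"
        using 2 sublinear_neg_le[OF p, of y0] by (intro mult_left_mono_neg) auto
      then show ?thesis
        using t 2 sublinear_scaleR[OF p, of "- t" "- y0"] by simp
    qed
  qed
  moreover have "a = b" if ab: "(x, a) \<in> span {(y0, p y0)}" "(x, b) \<in> span {(y0, p y0)}"
    for x a b
  proof -
    obtain s where s: "x = s *\<^sub>R y0" "a = s * p y0"
      using ab(1) unfolding span_singleton by auto
    obtain t where t: "x = t *\<^sub>R y0" "b = t * p y0"
      using ab(2) unfolding span_singleton by auto
    have "s = t \<or> y0 = 0"
      using s(1) t(1) by auto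
    then show ?thesis
      using s t sublinear_zero[OF p] by auto
  qed
  ultimately show ?thesis
    unfolding dominated_graph_def by simp
qed

lemma dominated_graph_total_linear:
  assumes "dominated_graph p M" "fst ` M = UNIV"
  obtains F where "linear F" "\<And>x. (x, F x) \<in> M"
proof -
  have sub: "subspace M" and sv: "\<And>x a b. (x, a) \<in> M \<Longrightarrow> (x, b) \<in> M \<Longrightarrow> a = b"
    using assms(1) unfolding dominated_graph_def by blast+
  define F where "F x = (THE a. (x, a) \<in> M)" for x
  have F_eq: "F x = a" if "(x, a) \<in> M" for x a
    unfolding F_def using that sv by (intro the_equality)
  have F_mem: "(x, F x) \<in> M" for x
  proof -
    obtain a where "(x, a) \<in> M"
      using assms(2) by (metis UNIV_I imageE prod.collapse)
    then show ?thesis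
      using F_eq by simp
  qed
  have "linear F"
  proof (rule linearI)
    show "F (x + y) = F x + F y" for x y
      using subspace_add[OF sub F_mem[of x] F_mem[of y]] by (intro F_eq) simp
    show "F (c *\<^sub>R x) = c *\<^sub>R F x" for c x
      using subspace_scale[OF sub F_mem[of x], of c] by (simp add: F_eq)
  qed
  then show ?thesis
    using F_mem by (rule that)
qed

theorem hahn_banach_sublinear:
  fixes p :: "'a::real_vector \<Rightarrow> real"
  assumes p: "sublinear p"
  obtains F where "linear F" "\<And>x. F x \<le> p x" "F y0 = p y0"
proof -
  obtain M where M: "dominated_graph p M" "span {(y0, p y0)} \<subseteq> M" "fst ` M = UNIV"
    by (rule dominated_graph_maximal_extension[OF p dominated_graph_span_singleton[OF p]])
  obtain F where F: "linear F" "\<And>x. (x, F x) \<in> M"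
    by (rule dominated_graph_total_linear[OF M(1,3)]) blast
  have "F x \<le> p x" for x
    using M(1) F(2) unfolding dominated_graph_def by blast
  moreover have "F y0 = p y0"
    using M F(2)[of y0] span_base[of "(y0, p y0)" "{(y0, p y0)}"]
    unfolding dominated_graph_def by blast
  ultimately show ?thesis
    using that F(1) by blast
qed

section \<open>Minkowski gauge and separation of a point from a convex set\<close>

definition minkowski_gauge :: "'a::real_vector set \<Rightarrow> 'a \<Rightarrow> real" where
  "minkowski_gauge V x = Inf {t. 0 < t \<and> inverse t *\<^sub>R x \<in> V}"

locale convex_zero_nbhd =
  fixes V :: "'a::real_normed_vector set" and r :: real
  assumes convex: "convex V" and radius_pos: "0 < r" and ball_subset: "ball 0 r \<subseteq> V"
begin

definition scales :: "'a \<Rightarrow> real set" where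
  "scales x = {t. 0 < t \<and> inverse t *\<^sub>R x \<in> V}"

lemma gauge_eq_Inf_scales: "minkowski_gauge V x = Inf (scales x)"
  unfolding minkowski_gauge_def scales_def ..

lemma zero_mem: "0 \<in> V"
  using ball_subset radius_pos by auto

lemma mem_scales_if_gt: "norm x / r < t \<Longrightarrow> t \<in> scales x"
proof -
  assume t: "norm x / r < t"
  then have "0 < t"
    using radius_pos by (smt (verit) divide_nonneg_pos norm_ge_zero)
  moreover from t have "norm (inverse t *\<^sub>R x) < r"
    using \<open>0 < t\<close> radius_pos by (simp add: field_simps)
  ultimately show "t \<in> scales x"
    using ball_subset unfolding scales_def by auto
qed

lemma scales_nonempty: "scales x \<noteq> {}"
  using mem_scales_if_gt[of x "norm x / r + 1"] by auto

lemma bdd_below_scales: "bdd_below (scales x)"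
  unfolding scales_def bdd_below_def by (auto intro: less_imp_le)

lemma gauge_le: "t \<in> scales x \<Longrightarrow> minkowski_gauge V x \<le> t"
  unfolding gauge_eq_Inf_scales by (rule cInf_lower[OF _ bdd_below_scales])

lemma gauge_le_norm: "minkowski_gauge V x \<le> norm x / r"
  by (rule dense_ge) (auto intro: gauge_le mem_scales_if_gt)

lemma scales_upward: "t \<in> scales x \<Longrightarrow> t \<le> s \<Longrightarrow> s \<in> scales x"
proof -
  assume t: "t \<in> scales x" and "t \<le> s"
  then have "0 < t" "inverse t *\<^sub>R x \<in> V" "0 < s"
    unfolding scales_def by auto
  then have "(t / s) *\<^sub>R (inverse t *\<^sub>R x) + (1 - t / s) *\<^sub>R 0 \<in> V"
    using \<open>t \<le> s\<close> by (intro convexD[OF convex _ zero_mem]) auto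
  then show "s \<in> scales x"
    using \<open>0 < t\<close> \<open>0 < s\<close> unfolding scales_def by (simp add: inverse_eq_divide)
qed

lemma gauge_less: "minkowski_gauge V x < s \<Longrightarrow> s \<in> scales x"
  using cInf_lessD[OF scales_nonempty] scales_upward unfolding gauge_eq_Inf_scales
  by (meson less_le)

lemma sublinear_gauge: "sublinear (minkowski_gauge V)"
  unfolding sublinear_def
proof (intro conjI allI impI)
  fix x y
  show "minkowski_gauge V (x + y) \<le> minkowski_gauge V x + minkowski_gauge V y"
  proof (rule dense_ge)
    fix s assume s: "minkowski_gauge V x + minkowski_gauge V y < s"
    define e where "e = (s - minkowski_gauge V x - minkowski_gauge V y) / 2"
    define s1 where "s1 = minkowski_gauge V x + e"
    define s2 where "s2 = minkowski_gauge V y + e"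
    have "s1 \<in> scales x" "s2 \<in> scales y"
      using s unfolding s1_def s2_def e_def by (auto intro: gauge_less)
    then have s12: "0 < s1" "inverse s1 *\<^sub>R x \<in> V" "0 < s2" "inverse s2 *\<^sub>R y \<in> V"
      unfolding scales_def by auto
    have "s = s1 + s2"
      unfolding s1_def s2_def e_def by simp
    have "(s1 / s) *\<^sub>R (inverse s1 *\<^sub>R x) + (s2 / s) *\<^sub>R (inverse s2 *\<^sub>R y) \<in> V"
      using s12 \<open>s = s1 + s2\<close> by (intro convexD[OF convex]) (auto simp: add_divide_distrib[symmetric])
    then have "inverse s *\<^sub>R (x + y) \<in> V"
      using s12 \<open>s = s1 + s2\<close> by (simp add: inverse_eq_divide scaleR_add_right)
    then show "minkowski_gauge V (x + y) \<le> s"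
      using s12 \<open>s = s1 + s2\<close> by (intro gauge_le) (simp add: scales_def)
  qed
next
  fix x and t :: real assume t: "0 < t"
  show "minkowski_gauge V (t *\<^sub>R x) \<le> t * minkowski_gauge V x"
  proof (rule dense_ge)
    fix s assume "t * minkowski_gauge V x < s"
    then have "s / t \<in> scales x"
      using t by (intro gauge_less) (simp add: field_simps)
    then have "s \<in> scales (t *\<^sub>R x)"
      using t unfolding scales_def by (simp add: zero_less_divide_iff inverse_eq_divide)
    then show "minkowski_gauge V (t *\<^sub>R x) \<le> s"
      by (rule gauge_le)
  qed
qed

lemma gauge_ge_1_outside: "x \<notin> V \<Longrightarrow> 1 \<le> minkowski_gauge V x"
  using gauge_less[of x 1] unfolding scales_def by force

lemma gauge_less_1_inside:
  assumes "open V" "x \<in> V"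
  shows "minkowski_gauge V x < 1"
proof (cases "x = 0")
  case True
  then show ?thesis
    using gauge_le_norm[of x] radius_pos by simp
next
  case False
  obtain e where e: "0 < e" "ball x e \<subseteq> V"
    using assms openE by blast
  define l where "l = 1 + e / (2 * norm x)"
  have "1 < l"
    using e False unfolding l_def by simp
  have "x - l *\<^sub>R x = (1 - l) *\<^sub>R x"
    by (simp add: algebra_simps)
  then have "dist x (l *\<^sub>R x) = (l - 1) * norm x"
    using \<open>1 < l\<close> by (simp add: dist_norm)
  also have "\<dots> < e"
    using e False unfolding l_def by simp
  finally have "inverse l \<in> scales x"
    using e \<open>1 < l\<close> unfolding scales_def by auto
  then have "minkowski_gauge V x \<le> inverse l"
    by (rule gauge_le)
  also have "\<dots> < 1"
    using \<open>1 < l\<close> by (simp add: inverse_less_1_iff)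
  finally show ?thesis .
qed

end

theorem separation_open_convex_point:
  fixes U :: "'a::real_normed_vector set"
  assumes "open U" "convex U" "u0 \<in> U" "x0 \<notin> U"
  obtains f :: "'a \<Rightarrow>\<^sub>L real" where "\<And>u. u \<in> U \<Longrightarrow> f u < f x0"
proof -
  define V where "V = (+) (- u0) ` U"
  have "open V"
    unfolding V_def by (rule open_translation[OF assms(1)])
  have "convex V"
    unfolding V_def by (rule convex_translation[OF assms(2)])
  have "0 \<in> V"
    unfolding V_def using assms(3) by force
  then obtain r where "0 < r" "ball 0 r \<subseteq> V"
    using \<open>open V\<close> openE by blast
  then interpret convex_zero_nbhd V r
    using \<open>convex V\<close> by unfold_locales
  obtain F where F: "linear F" "\<And>x. F x \<le> minkowski_gauge V x"
    "F (x0 - u0) = minkowski_gauge V (x0 - u0)"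
    using hahn_banach_sublinear[OF sublinear_gauge] by blast
  have "\<bar>F x\<bar> \<le> norm x * inverse r" for x
    using F(2)[of x] F(2)[of "- x"] gauge_le_norm[of x] gauge_le_norm[of "- x"] linear_neg[OF F(1)]
    by (simp add: abs_le_iff divide_inverse)
  then have "bounded_linear F"
    using F(1) by (intro bounded_linear_intro[of F "inverse r"]) (auto simp: linear_add linear_scale)
  have "x0 - u0 \<notin> V"
    using assms(4) unfolding V_def by force
  then have "1 \<le> F (x0 - u0)"
    using F(3) gauge_ge_1_outside by simp
  show ?thesis
  proof (rule that[of "Blinfun F"])
    fix u assume "u \<in> U"
    then have "u - u0 \<in> V"
      unfolding V_def by force
    then have "F (u - u0) < F (x0 - u0)"
      using F(2) gauge_less_1_inside[OF \<open>open V\<close>] \<open>1 \<le> F (x0 - u0)\<close> by (meson le_less_trans less_le_trans)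
    then show "Blinfun F u < Blinfun F x0"
      using \<open>bounded_linear F\<close> by (simp add: bounded_linear_Blinfun_apply linear_diff[OF F(1)])
  qed
qed

lemma blinfun_positive_in_ball:
  fixes g :: "'a::real_normed_vector \<Rightarrow>\<^sub>L real"
  assumes "g \<noteq> 0" "0 < d"
  obtains w where "norm w < d" "0 < g w"
proof -
  obtain e where "g e \<noteq> 0"
    using assms(1) by (metis blinfun_eqI zero_blinfun.rep_eq)
  define e' where "e' = (if g e > 0 then e else - e)"
  have "0 < g e'"
    using \<open>g e \<noteq> 0\<close> unfolding e'_def by (auto simp: blinfun.minus_right)
  then have "e' \<noteq> 0"
    by auto
  show ?thesis
  proof (rule that[of "(d / 2 / norm e') *\<^sub>R e'"])
    show "norm ((d / 2 / norm e') *\<^sub>R e') < d"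
      using \<open>e' \<noteq> 0\<close> assms(2) by simp
    show "0 < g ((d / 2 / norm e') *\<^sub>R e')"
      using \<open>0 < g e'\<close> \<open>e' \<noteq> 0\<close> assms(2) by (simp add: blinfun.scaleR_right)
  qed
qed

theorem separation_closed_convex_point:
  fixes A :: "'a::real_normed_vector set"
  assumes "closed A" "convex A" "A \<noteq> {}" "y \<notin> A"
  obtains f :: "'a \<Rightarrow>\<^sub>L real" and \<delta> where "norm f = 1" "0 < \<delta>" "\<And>a. a \<in> A \<Longrightarrow> f y + \<delta> \<le> f a"
proof -
  obtain d where "0 < d" and d: "ball y d \<subseteq> - A"
    using assms(1,4) open_Compl openE by (metis ComplI)
  define U where "U = (\<Union>a\<in>A. \<Union>w\<in>ball 0 d. {a + w})"
  have "open U"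
    unfolding U_def by (rule open_sums) simp
  have "convex U"
    unfolding U_def by (rule convex_sums[OF assms(2) convex_ball])
  obtain a0 where "a0 \<in> A"
    using assms(3) by blast
  then have "a0 + 0 \<in> U"
    unfolding U_def using \<open>0 < d\<close> by force
  have "y \<notin> U"
  proof
    assume "y \<in> U"
    then obtain a w where "a \<in> A" "norm w < d" "y = a + w"
      unfolding U_def by auto
    then have "a \<in> ball y d"
      by (simp add: dist_norm)
    with d \<open>a \<in> A\<close> show False
      by blast
  qed
  obtain g :: "'a \<Rightarrow>\<^sub>L real" where g: "\<And>u. u \<in> U \<Longrightarrow> g u < g y"
    using separation_open_convex_point[OF \<open>open U\<close> \<open>convex U\<close> \<open>a0 + 0 \<in> U\<close> \<open>y \<notin> U\<close>] by blast
  have "g \<noteq> 0"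
    using g[OF \<open>a0 + 0 \<in> U\<close>] by auto
  then obtain w where "norm w < d" "0 < g w"
    using \<open>0 < d\<close> by (rule blinfun_positive_in_ball)
  have gA: "g a + g w \<le> g y" if "a \<in> A" for a
  proof -
    have "a + w \<in> U"
      unfolding U_def using that \<open>norm w < d\<close> by force
    then show ?thesis
      using g by (fastforce simp: blinfun.add_right)
  qed
  define f where "f = - (inverse (norm g) *\<^sub>R g)"
  show ?thesis
  proof (rule that[of f "g w / norm g"])
    show "norm f = 1"
      using \<open>g \<noteq> 0\<close> unfolding f_def by simp
    show "0 < g w / norm g"
      using \<open>g w > 0\<close> \<open>g \<noteq> 0\<close> by simp
    fix a assume "a \<in> A"
    then have "inverse (norm g) * (g a + g w) \<le> inverse (norm g) * g y"
      using gA by (simp add: mult_left_mono)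
    then show "f y + g w / norm g \<le> f a"
      unfolding f_def by (simp add: blinfun.minus_left blinfun.scaleR_left algebra_simps divide_inverse)
  qed
qed

section \<open>Weak-star compactness of the dual unit ball\<close>

lemma topspace_wstar_topology [simp]: "topspace wstar_topology = UNIV"
  using strong_operator_topology_topspace
  unfolding wstar_topology_def strong_operator_topology_def .

lemma continuous_map_wstar_evaluation:
  "continuous_map wstar_topology euclidean (\<lambda>f. blinfun_apply f x)"
  using strong_operator_topology_continuous_evaluation
  unfolding wstar_topology_def strong_operator_topology_def .

lemma Hausdorff_space_wstar_topology:
  "Hausdorff_space (wstar_topology :: ('a::real_normed_vector \<Rightarrow>\<^sub>L real) topology)"
proof (rule Hausdorff_space_injective_preimage)
  show "Hausdorff_space (euclidean :: ('a \<Rightarrow> real) topology)"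
    unfolding euclidean_product_topology[symmetric] Hausdorff_space_product_topology by simp
  show "continuous_map wstar_topology euclidean (blinfun_apply :: ('a \<Rightarrow>\<^sub>L real) \<Rightarrow> _)"
    using continuous_map_pullback[of euclidean euclidean id UNIV blinfun_apply]
    unfolding wstar_topology_def by simp
  show "inj_on blinfun_apply (topspace (wstar_topology :: ('a \<Rightarrow>\<^sub>L real) topology))"
    by (simp add: blinfun_apply_inject inj_on_def)
qed

lemma closedin_wstar_halfspace: "closedin wstar_topology {f. c \<le> blinfun_apply f v}"
  using closedin_continuous_map_preimage[OF continuous_map_wstar_evaluation, of "{c..}" v]
  by simp

definition dual_ball_functions :: "('a::real_normed_vector \<Rightarrow> real) set" where
  "dual_ball_functions = {g. linear g \<and> (\<forall>x. \<bar>g x\<bar> \<le> norm x)}"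

lemma dual_ball_functions_eq:
  "dual_ball_functions = {g. (\<forall>x. \<bar>g x\<bar> \<le> norm x) \<and> (\<forall>x y. g (x + y) = g x + g y) \<and>
     (\<forall>c x. g (c *\<^sub>R x) = c * g x)}"
  unfolding dual_ball_functions_def linear_iff by auto

lemma bounded_linear_dual_ball_function: "g \<in> dual_ball_functions \<Longrightarrow> bounded_linear g"
  unfolding dual_ball_functions_def by (auto intro!: bounded_linear_intro[of g 1] simp: linear_iff)

lemma closed_dual_ball_functions: "closed dual_ball_functions"
  unfolding dual_ball_functions_eq Collect_conj_eq
  by (intro closed_Int closed_Collect_all closed_Collect_le closed_Collect_eq continuous_intros)
     simp_all

lemma compact_dual_ball_functions: "compact (dual_ball_functions :: ('a::real_normed_vector \<Rightarrow> real) set)"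
proof -
  have "compactin (product_topology (\<lambda>_. euclidean) UNIV) (PiE UNIV (\<lambda>x::'a. {- norm x .. norm x}))"
    by (subst compactin_PiE) simp
  then have "compact (PiE UNIV (\<lambda>x::'a. {- norm x .. norm x}))"
    by (simp add: euclidean_product_topology)
  moreover have "dual_ball_functions \<subseteq> PiE UNIV (\<lambda>x::'a. {- norm x .. norm x})"
    unfolding dual_ball_functions_def PiE_UNIV_domain by (auto simp: abs_le_iff) (metis minus_le_iff)
  ultimately show ?thesis
    using closed_dual_ball_functions by (metis compact_Int_closed inf.absorb_iff2)
qed

lemma dual_unit_ball_eq: "{f :: 'a::real_normed_vector \<Rightarrow>\<^sub>L real. norm f \<le> 1} = Blinfun ` dual_ball_functions"
proof (intro equalityI subsetI)
  fix f :: "'a \<Rightarrow>\<^sub>L real" assume "f \<in> {f. norm f \<le> 1}"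
  then have "\<bar>f x\<bar> \<le> norm x" for x
    using norm_blinfun[of f x] mult_right_mono[of "norm f" 1 "norm x"] by simp
  then have "blinfun_apply f \<in> dual_ball_functions"
    unfolding dual_ball_functions_def by (simp add: bounded_linear.linear[OF blinfun.bounded_linear_right])
  then show "f \<in> Blinfun ` dual_ball_functions"
    by (intro image_eqI[of _ _ "blinfun_apply f"]) (simp_all add: blinfun_apply_inverse)
next
  fix f :: "'a \<Rightarrow>\<^sub>L real" assume "f \<in> Blinfun ` dual_ball_functions"
  then obtain g where g: "g \<in> dual_ball_functions" "f = Blinfun g"
    by blast
  then show "f \<in> {f. norm f \<le> 1}"
    using bounded_linear_dual_ball_function[OF g(1)]
    by (auto intro!: norm_blinfun_bound simp: bounded_linear_Blinfun_apply dual_ball_functions_def)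
qed

theorem banach_alaoglu:
  "compactin wstar_topology {f :: 'a::real_normed_vector \<Rightarrow>\<^sub>L real. norm f \<le> 1}"
proof -
  have "continuous_map (subtopology euclidean dual_ball_functions) wstar_topology
      (Blinfun :: ('a \<Rightarrow> real) \<Rightarrow> _)"
    unfolding wstar_topology_def
  proof (rule continuous_map_pullback')
    show "continuous_map (subtopology euclidean dual_ball_functions) euclidean
        (blinfun_apply \<circ> (Blinfun :: ('a \<Rightarrow> real) \<Rightarrow> _))"
      by (rule continuous_map_eq[OF continuous_map_from_subtopology[OF continuous_map_id]])
         (simp add: bounded_linear_Blinfun_apply bounded_linear_dual_ball_function)
  qed simp
  moreover have "compactin (subtopology euclidean dual_ball_functions) (dual_ball_functions :: ('a \<Rightarrow> real) set)"
    by (simp add: compactin_subtopology compact_dual_ball_functions)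
  ultimately show ?thesis
    unfolding dual_unit_ball_eq by (rule image_compactin[rotated])
qed

lemma compactin_wstar_cch:
  assumes "\<And>f. f \<in> S \<Longrightarrow> norm f \<le> 1"
  shows "compactin wstar_topology (wstar_cch S)"
proof -
  have "convex {f :: 'a::real_normed_vector \<Rightarrow>\<^sub>L real. norm f \<le> 1}"
    using convex_cball[of "0 :: 'a \<Rightarrow>\<^sub>L real" 1] by (simp add: cball_def dist_norm)
  then have "convex hull S \<subseteq> {f. norm f \<le> 1}"
    using assms by (intro hull_minimal) auto
  then have "wstar_cch S \<subseteq> {f. norm f \<le> 1}"
    unfolding wstar_cch_def
    using compactin_imp_closedin[OF Hausdorff_space_wstar_topology banach_alaoglu]
    by (rule closure_of_minimal)
  then show ?thesis
    unfolding wstar_cch_def by (rule closed_compactin[OF banach_alaoglu _ closedin_closure_of])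
qed

lemma zero_notin_wstar_cch:
  assumes "0 < c" "\<And>f. f \<in> S \<Longrightarrow> c \<le> blinfun_apply f v"
  shows "0 \<notin> wstar_cch S"
proof -
  have "convex {f :: 'a::real_normed_vector \<Rightarrow>\<^sub>L real. c \<le> blinfun_apply f v}"
    using convex_linear_vimage[OF _ convex_real_interval(1)[of c], of "\<lambda>f. blinfun_apply f v"]
    by (simp add: bounded_linear.linear[OF blinfun.bounded_linear_left] vimage_def)
  then have "convex hull S \<subseteq> {f. c \<le> blinfun_apply f v}"
    using assms(2) by (intro hull_minimal) auto
  then have "wstar_cch S \<subseteq> {f. c \<le> blinfun_apply f v}"
    unfolding wstar_cch_def by (rule closure_of_minimal[OF _ closedin_wstar_halfspace])
  moreover have "\<not> c \<le> blinfun_apply 0 v"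
    using assms(1) by simp
  ultimately show ?thesis
    by blast
qed

section \<open>Families of continuous affine functionals\<close>

definition affine_functional :: "('a::real_normed_vector \<Rightarrow> real) \<Rightarrow> bool" where
  "affine_functional \<phi> \<longleftrightarrow> (\<exists>f c. \<phi> = (\<lambda>y. blinfun_apply f y - c))"

definition linear_part :: "('a::real_normed_vector \<Rightarrow> real) \<Rightarrow> ('a \<Rightarrow>\<^sub>L real)" where
  "linear_part \<phi> = Blinfun (\<lambda>y. \<phi> y - \<phi> 0)"

lemma linear_part_affine [simp]: "linear_part (\<lambda>y. blinfun_apply f y - c) = f"
  unfolding linear_part_def by (simp add: blinfun_apply_inverse)

lemma affine_functional_step:
  "affine_functional \<phi> \<Longrightarrow> \<phi> (y + t *\<^sub>R v) - \<phi> y = t * blinfun_apply (linear_part \<phi>) v"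
  unfolding affine_functional_def by (auto simp: blinfun.add_right blinfun.scaleR_right)

lemma affine_functional_diff:
  "affine_functional \<phi> \<Longrightarrow> \<phi> x - \<phi> z = blinfun_apply (linear_part \<phi>) (x - z)"
  unfolding affine_functional_def by (auto simp: blinfun.diff_right)

lemma equi_gateaux_affine:
  assumes "\<And>\<phi>. \<phi> \<in> C \<Longrightarrow> affine_functional \<phi>"
  shows "equi_gateaux C y linear_part"
  unfolding equi_gateaux_def gateaux_diff_def
proof (intro conjI ballI allI impI)
  fix \<phi> v assume "\<phi> \<in> C"
  have "\<forall>\<^sub>F t in at_right 0. blinfun_apply (linear_part \<phi>) v = (\<phi> (y + t *\<^sub>R v) - \<phi> y) / t"
    using affine_functional_step[OF assms[OF \<open>\<phi> \<in> C\<close>]] by (simp add: eventually_at_filter)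
  then show "((\<lambda>t. (\<phi> (y + t *\<^sub>R v) - \<phi> y) / t) \<longlongrightarrow> blinfun_apply (linear_part \<phi>) v) (at_right 0)"
    by (rule Lim_transform_eventually[OF tendsto_const])
next
  fix v and \<epsilon> :: real assume "0 < \<epsilon>"
  then show "\<forall>\<^sub>F t in at_right 0. \<forall>\<phi>\<in>C.
      \<bar>(\<phi> (y + t *\<^sub>R v) - \<phi> y - t * blinfun_apply (linear_part \<phi>) v) / t\<bar> \<le> \<epsilon>"
    using affine_functional_step[OF assms] by simp
qed

lemma equi_lipschitz_affine:
  assumes "\<And>\<phi>. \<phi> \<in> C \<Longrightarrow> affine_functional \<phi> \<and> norm (linear_part \<phi>) \<le> r"
  shows "equi_lipschitz r C y"
  unfolding equi_lipschitz_def
proof (intro exI[of _ 1] conjI ballI)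
  fix \<phi> x z assume "\<phi> \<in> C"
  then have "\<bar>\<phi> x - \<phi> z\<bar> \<le> norm (linear_part \<phi>) * norm (x - z)"
    using assms norm_blinfun[of "linear_part \<phi>" "x - z"] by (simp add: affine_functional_diff)
  also have "\<dots> \<le> r * norm (x - z)"
    using assms[OF \<open>\<phi> \<in> C\<close>] by (simp add: mult_right_mono)
  finally show "\<bar>\<phi> x - \<phi> z\<bar> \<le> r * norm (x - z)" .
qed simp

lemma equi_lipschitz_imp_equi_lsc:
  assumes "equi_lipschitz r C y" "0 \<le> r"
  shows "equi_lsc C y"
  unfolding equi_lsc_def
proof (intro allI impI)
  fix \<epsilon> :: real assume "0 < \<epsilon>"
  obtain \<delta> where "0 < \<delta>" and lip: "\<And>\<phi> z. \<phi> \<in> C \<Longrightarrow> z \<in> ball y \<delta> \<Longrightarrow> \<bar>\<phi> z - \<phi> y\<bar> \<le> r * norm (z - y)"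
    using assms(1) unfolding equi_lipschitz_def by force
  define \<rho> where "\<rho> = min \<delta> (\<epsilon> / (r + 1))"
  have "0 < \<rho>"
    using \<open>0 < \<delta>\<close> \<open>0 < \<epsilon>\<close> assms(2) unfolding \<rho>_def by simp
  have "\<phi> z - \<phi> y > - \<epsilon>" if "z \<in> ball y \<rho>" "\<phi> \<in> C" for z \<phi>
  proof -
    have "norm (z - y) \<le> \<epsilon> / (r + 1)" "z \<in> ball y \<delta>"
      using that(1) unfolding \<rho>_def by (auto simp: dist_norm norm_minus_commute)
    then have "\<bar>\<phi> z - \<phi> y\<bar> \<le> r * (\<epsilon> / (r + 1))"
      using lip[OF that(2)] assms(2) by (meson mult_left_mono order_trans)
    also have "\<dots> < \<epsilon>"
      using assms(2) \<open>0 < \<epsilon>\<close> by (simp add: field_simps)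
    finally show ?thesis
      by linarith
  qed
  then show "\<exists>U. open U \<and> y \<in> U \<and> (\<forall>z\<in>U. \<forall>\<phi>\<in>C. \<phi> z - \<phi> y > - \<epsilon>)"
    using \<open>0 < \<rho>\<close> by (intro exI[of _ "ball y \<rho>"]) auto
qed

section \<open>The family determined by the barrier cone\<close>

lemma mem_uminus_bar: "f \<in> uminus ` bar A \<longleftrightarrow> bdd_below (blinfun_apply f ` A)"
proof -
  have "f \<in> uminus ` bar A \<longleftrightarrow> - f \<in> bar A"
    by (force simp: image_iff)
  also have "\<dots> \<longleftrightarrow> bdd_above ((\<lambda>x. - blinfun_apply f x) ` A)"
    unfolding bar_def by (simp add: blinfun.minus_left)
  also have "\<dots> \<longleftrightarrow> bdd_below (blinfun_apply f ` A)"
    by (rule bdd_above_uminus_image)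
  finally show ?thesis .
qed

lemma Cfam_eq_image:
  "Cfam A = (\<lambda>f y. blinfun_apply f y - (INF x\<in>A. blinfun_apply f x)) ` (dual_sphere \<inter> uminus ` bar A)"
  unfolding Cfam_def by auto

lemma affine_functional_Cfam:
  "\<phi> \<in> Cfam A \<Longrightarrow> affine_functional \<phi> \<and> norm (linear_part \<phi>) = 1"
  unfolding Cfam_def dual_sphere_def affine_functional_def by auto

lemma linear_part_image_Cfam: "linear_part ` Cfam A = dual_sphere \<inter> uminus ` bar A"
  unfolding Cfam_eq_image image_image by simp

lemma Cfam_nonempty:
  assumes "bar A \<noteq> {0}"
  shows "Cfam A \<noteq> {}"
proof -
  obtain g where "g \<in> bar A" "g \<noteq> 0"
    using assms unfolding bar_def by (auto simp: bdd_above_def)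
  define f where "f = - (inverse (norm g) *\<^sub>R g)"
  have "norm f = 1"
    using \<open>g \<noteq> 0\<close> unfolding f_def by simp
  moreover have "- f \<in> bar A"
  proof -
    obtain M where "\<And>x. x \<in> A \<Longrightarrow> g x \<le> M"
      using \<open>g \<in> bar A\<close> unfolding bar_def bdd_above_def by auto
    then have "\<And>x. x \<in> A \<Longrightarrow> (- f) x \<le> inverse (norm g) * M"
      unfolding f_def by (simp add: blinfun.scaleR_left mult_left_mono)
    then show ?thesis
      unfolding bar_def bdd_above_def by blast
  qed
  ultimately have "f \<in> dual_sphere \<inter> uminus ` bar A"
    unfolding dual_sphere_def by (force simp: image_iff)
  then show ?thesis
    unfolding Cfam_eq_image by blast
qed

lemma nonneg_set_Cfam:
  fixes A :: "'a::real_normed_vector set"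
  assumes "closed A" "convex A" "A \<noteq> {}"
  shows "nonneg_set (Cfam A) = A"
proof (intro equalityI subsetI)
  fix y assume "y \<in> A"
  have "(INF x\<in>A. blinfun_apply f x) \<le> blinfun_apply f y"
    if "bdd_below (blinfun_apply f ` A)" for f :: "'a \<Rightarrow>\<^sub>L real"
    using that \<open>y \<in> A\<close> by (rule cINF_lower)
  then show "y \<in> nonneg_set (Cfam A)"
    unfolding nonneg_set_def Cfam_eq_image by (auto simp: mem_uminus_bar)
next
  fix y assume y: "y \<in> nonneg_set (Cfam A)"
  show "y \<in> A"
  proof (rule ccontr)
    assume "y \<notin> A"
    then obtain f :: "'a \<Rightarrow>\<^sub>L real" and \<delta> where f: "norm f = 1" "0 < \<delta>" "\<And>a. a \<in> A \<Longrightarrow> f y + \<delta> \<le> f a"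
      using separation_closed_convex_point[OF assms] by blast
    then have "bdd_below (blinfun_apply f ` A)"
      unfolding bdd_below_def by blast
    then have "(\<lambda>z. f z - (INF x\<in>A. blinfun_apply f x)) \<in> Cfam A"
      using f(1) unfolding Cfam_eq_image dual_sphere_def by (auto simp: mem_uminus_bar)
    then have "(INF x\<in>A. blinfun_apply f x) \<le> f y"
      using y unfolding nonneg_set_def by auto
    moreover have "f y + \<delta> \<le> (INF x\<in>A. blinfun_apply f x)"
      using assms(3) f(3) by (intro cINF_greatest) auto
    ultimately show False
      using f(2) by linarith
  qed
qed

theorem weak_admissible_Cfam:
  assumes "closed A" "convex A" "bar A \<noteq> {0}" "y \<in> A"
  shows "weak_admissible A y (Cfam A)"
  unfolding weak_admissible_def
proof (intro conjI exI[of _ linear_part] disjI2)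
  have affine: "\<And>\<phi>. \<phi> \<in> Cfam A \<Longrightarrow> affine_functional \<phi> \<and> norm (linear_part \<phi>) \<le> 1"
    using affine_functional_Cfam by fastforce
  show "y \<in> A" "Cfam A \<noteq> {}" "A = nonneg_set (Cfam A)"
    using assms nonneg_set_Cfam Cfam_nonempty by auto
  show "equi_gateaux (Cfam A) y linear_part"
    using affine by (intro equi_gateaux_affine) blast
  show "equi_lsc {\<phi> \<in> Cfam A. \<phi> y \<noteq> 0} y"
    using affine by (intro equi_lipschitz_imp_equi_lsc[of 1] equi_lipschitz_affine) auto
  show "compactin wstar_topology (wstar_cch (linear_part ` Cfam A))"
    unfolding linear_part_image_Cfam by (rule compactin_wstar_cch) (simp add: dual_sphere_def)
qed

theorem admissible_Cfam:
  assumes "closed A" "convex A" "bar A \<noteq> {0}" "y \<in> A"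
    and "0 \<notin> wstar_cch (dual_sphere \<inter> uminus ` bar A)"
  shows "admissible A y (Cfam A)"
  unfolding admissible_def
proof (intro conjI exI[of _ linear_part] exI[of _ 1])
  have affine: "\<And>\<phi>. \<phi> \<in> Cfam A \<Longrightarrow> affine_functional \<phi> \<and> norm (linear_part \<phi>) \<le> 1"
    using affine_functional_Cfam by fastforce
  show "y \<in> A" "Cfam A \<noteq> {}" "A = nonneg_set (Cfam A)"
    using assms nonneg_set_Cfam Cfam_nonempty by auto
  show "equi_gateaux (Cfam A) y linear_part"
    using affine by (intro equi_gateaux_affine) blast
  show "equi_lipschitz 1 (Cfam A) y"
    using affine by (rule equi_lipschitz_affine)
  show "0 \<notin> wstar_cch (linear_part ` Cfam A)"
    unfolding linear_part_image_Cfam by (rule assms(5))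
qed simp

section \<open>Recession cones and convex cones\<close>

lemma bar_ne_zero:
  fixes A :: "'a::real_normed_vector set"
  assumes "closed A" "convex A" "A \<noteq> {}" "A \<noteq> UNIV"
  shows "bar A \<noteq> {0}"
proof -
  obtain z where "z \<notin> A"
    using assms(4) by blast
  then obtain f :: "'a \<Rightarrow>\<^sub>L real" and \<delta> where f: "norm f = 1" "\<And>a. a \<in> A \<Longrightarrow> f z + \<delta> \<le> f a"
    using separation_closed_convex_point[OF assms(1-3)] by blast
  then have "bdd_below (blinfun_apply f ` A)"
    unfolding bdd_below_def by blast
  then have "- f \<in> bar A"
    using mem_uminus_bar[of f A] by (force simp: image_iff)
  moreover have "- f \<noteq> 0"
    using f(1) by auto
  ultimately show ?thesis
    by blast
qed

lemma uminus_bar_nonneg_on_rec_cone: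
  assumes "f \<in> uminus ` bar A" "A \<noteq> {}" "w \<in> rec_cone A"
  shows "0 \<le> blinfun_apply f w"
proof (rule ccontr)
  assume neg: "\<not> 0 \<le> blinfun_apply f w"
  obtain m where m: "\<And>a. a \<in> A \<Longrightarrow> m \<le> f a"
    using assms(1) unfolding mem_uminus_bar bdd_below_def by auto
  obtain y where "y \<in> A"
    using assms(2) by blast
  define l where "l = (f y - m + 1) / (- f w)"
  have "0 < l"
    unfolding l_def using m[OF \<open>y \<in> A\<close>] neg by (intro divide_pos_pos) auto
  then have "y + l *\<^sub>R w \<in> A"
    using assms(3) \<open>y \<in> A\<close> unfolding rec_cone_def by blast
  then have "m \<le> f y + l * f w"
    using m by (force simp: blinfun.add_right blinfun.scaleR_right)
  also have "l * f w = - (f y - m + 1)"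
    unfolding l_def using neg by (simp add: field_simps)
  finally show False
    by simp
qed

lemma norm_le_of_cball_in_rec_cone:
  assumes "f \<in> uminus ` bar A" "A \<noteq> {}" "cball v e \<subseteq> rec_cone A" "0 < e"
  shows "e * norm f \<le> blinfun_apply f v"
proof -
  have "\<bar>f x\<bar> * e \<le> f v * norm x" for x
  proof (cases "x = 0")
    case False
    define c where "c = e / norm x"
    have "0 < c" "norm (c *\<^sub>R x) = e"
      using False \<open>0 < e\<close> unfolding c_def by simp_all
    then have "v - c *\<^sub>R x \<in> rec_cone A" "v + c *\<^sub>R x \<in> rec_cone A"
      using assms(3) by (auto simp: dist_norm subset_iff)
    then have "0 \<le> f v - c * f x" "0 \<le> f v + c * f x"
      using uminus_bar_nonneg_on_rec_cone[OF assms(1,2)]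
      by (fastforce simp: blinfun.diff_right blinfun.add_right blinfun.scaleR_right)+
    then have "c * \<bar>f x\<bar> \<le> f v"
      by (simp add: abs_if)
    then show ?thesis
      using False \<open>0 < e\<close> unfolding c_def by (simp add: field_simps)
  qed simp
  moreover have "v \<in> rec_cone A"
    using assms(3,4) by auto
  ultimately have "norm f \<le> f v / e"
    using \<open>0 < e\<close> uminus_bar_nonneg_on_rec_cone[OF assms(1,2), of v]
    by (intro norm_blinfun_bound) (auto simp: field_simps)
  then show ?thesis
    using \<open>0 < e\<close> by (simp add: field_simps)
qed

theorem admissible_Cfam_of_interior_rec_cone:
  assumes "closed A" "convex A" "A \<noteq> UNIV" "interior (rec_cone A) \<noteq> {}" "y \<in> A"
  shows "admissible A y (Cfam A)"
proof -
  have "A \<noteq> {}"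
    using assms(5) by blast
  obtain v e where "0 < e" "cball v e \<subseteq> rec_cone A"
    using assms(4) by (meson all_not_in_conv mem_interior_cball)
  then have "e \<le> blinfun_apply f v" if "f \<in> dual_sphere \<inter> uminus ` bar A" for f
    using norm_le_of_cball_in_rec_cone[of f A v e] that \<open>A \<noteq> {}\<close>
    by (simp add: dual_sphere_def)
  then have "0 \<notin> wstar_cch (dual_sphere \<inter> uminus ` bar A)"
    using \<open>0 < e\<close> by (rule zero_notin_wstar_cch[rotated])
  moreover have "bar A \<noteq> {0}"
    using bar_ne_zero[OF assms(1,2) \<open>A \<noteq> {}\<close> assms(3)] .
  ultimately show ?thesis
    using admissible_Cfam[OF assms(1,2) _ assms(5)] by simp
qed

lemma convex_cone_subset_rec_cone:
  assumes "convex A" "cone A"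
  shows "A \<subseteq> rec_cone A"
proof -
  have "(\<forall>x\<in>A. \<forall>y\<in>A. x + y \<in> A) \<and> (\<forall>x\<in>A. \<forall>c\<ge>0. c *\<^sub>R x \<in> A)"
    using assms by (subst convex_cone[symmetric]) (rule conjI)
  then show ?thesis
    unfolding rec_cone_def by (auto simp: less_imp_le)
qed

lemma uminus_bar_cone: "cone A \<Longrightarrow> uminus ` bar A = dual_cone A"
proof (intro equalityI subsetI)
  fix f assume "cone A" "f \<in> uminus ` bar A"
  then obtain m where m: "\<And>a. a \<in> A \<Longrightarrow> m \<le> f a"
    unfolding mem_uminus_bar bdd_below_def by auto
  have "0 \<le> f a" if "a \<in> A" for a
  proof (rule ccontr)
    assume neg: "\<not> 0 \<le> f a"
    define t where "t = (\<bar>m\<bar> + 1) / (- f a)"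
    have "0 < t"
      unfolding t_def using neg by (intro divide_pos_pos) auto
    then have "t *\<^sub>R a \<in> A"
      using \<open>cone A\<close> \<open>a \<in> A\<close> unfolding cone_def by simp
    then have "m \<le> t * f a"
      using m by (force simp: blinfun.scaleR_right)
    also have "t * f a = - (\<bar>m\<bar> + 1)"
      unfolding t_def using neg by (simp add: field_simps)
    finally show False
      by simp
  qed
  then show "f \<in> dual_cone A"
    unfolding dual_cone_def by blast
next
  fix f assume "f \<in> dual_cone A"
  then show "f \<in> uminus ` bar A"
    unfolding mem_uminus_bar dual_cone_def bdd_below_def by auto
qed

lemma Cfam_cone:
  assumes "cone A" "A \<noteq> {}"
  shows "Cfam A = blinfun_apply ` (dual_sphere \<inter> dual_cone A)"
proof -
  have "(INF x\<in>A. blinfun_apply f x) = 0" if "f \<in> dual_cone A" for f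
  proof (rule antisym)
    have "bdd_below (blinfun_apply f ` A)"
      using that unfolding dual_cone_def bdd_below_def by auto
    moreover have "0 \<in> A"
      using assms cone_def by fastforce
    ultimately show "(INF x\<in>A. blinfun_apply f x) \<le> 0"
      using cINF_lower[of f A 0] by simp
    show "0 \<le> (INF x\<in>A. blinfun_apply f x)"
      using that assms(2) unfolding dual_cone_def by (intro cINF_greatest) auto
  qed
  then show ?thesis
    unfolding Cfam_eq_image uminus_bar_cone[OF assms(1)] by (intro image_cong) auto
qed

theorem admissible_dual_cone_of_interior:
  assumes "closed A" "convex A" "cone A" "A \<noteq> UNIV" "interior A \<noteq> {}" "y \<in> A"
  shows "admissible A y (blinfun_apply ` (dual_sphere \<inter> dual_cone A))"
proof -
  have "interior (rec_cone A) \<noteq> {}"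
    using interior_mono[OF convex_cone_subset_rec_cone[OF assms(2,3)]] assms(5) by blast
  then have "admissible A y (Cfam A)"
    using admissible_Cfam_of_interior_rec_cone assms(1,2,4,6) by blast
  moreover have "A \<noteq> {}"
    using assms(6) by blast
  ultimately show ?thesis
    using Cfam_cone[OF assms(3)] by simp
qed

theorem theorem3p7:
  fixes A :: "'a::real_normed_vector set"
  assumes "A \<noteq> {}" and "closed A" and "convex A" and "bar A \<noteq> {0}"
  shows "(\<forall>y\<in>A. weak_admissible A y (Cfam A))
    \<and> (0 \<notin> wstar_cch (dual_sphere \<inter> uminus ` bar A) \<longrightarrow> (\<forall>y\<in>A. admissible A y (Cfam A)))
    \<and> (\<forall>B :: 'a set. closed B \<and> convex B \<and> B \<noteq> UNIV \<and> interior (rec_cone B) \<noteq> {}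
         \<longrightarrow> (\<forall>y\<in>B. admissible B y (Cfam B)))
    \<and> (\<forall>B :: 'a set. closed B \<and> convex B \<and> cone B \<and> B \<noteq> UNIV \<and> interior B \<noteq> {}
         \<longrightarrow> (\<forall>y\<in>B. admissible B y (blinfun_apply ` (dual_sphere \<inter> dual_cone B))))"
proof (intro conjI ballI impI allI; (elim conjE)?)
  show "weak_admissible A y (Cfam A)" if "y \<in> A" for y
    using assms(2-4) that by (rule weak_admissible_Cfam)
  show "admissible A y (Cfam A)"
    if "0 \<notin> wstar_cch (dual_sphere \<inter> uminus ` bar A)" "y \<in> A" for y
    using assms(2-4) that(2,1) by (rule admissible_Cfam)
  show "admissible B y (Cfam B)"
    if "closed B" "convex B" "B \<noteq> UNIV" "interior (rec_cone B) \<noteq> {}" "y \<in> B" for B :: "'a set" and y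
    using that by (rule admissible_Cfam_of_interior_rec_cone)
  show "admissible B y (blinfun_apply ` (dual_sphere \<inter> dual_cone B))"
    if "closed B" "convex B" "cone B" "B \<noteq> UNIV" "interior B \<noteq> {}" "y \<in> B" for B :: "'a set" and y
    using that by (rule admissible_dual_cone_of_interior)
qed

end
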